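(* Let $\mu=\alpha_-\delta_{-\infty}+\alpha_0\mu_0+\alpha_+\delta_{+\infty}\in\mathcal{P}(\overline{\mathbb{Z}})$ with $\alpha_\sigma\ge0$ summing to $1$, $\mu_0\in\mathcal{P}(\mathbb{Z})$ and $\alpha_0\ne0$. Let $0<\varepsilon<\alpha_0/2$, $R\in\mathbb{N}$ with $R>\max\{R_{\overline{\mathbb{Z}}}(\varepsilon),R_{\mu_0}(\varepsilon)\}$, $n\in\mathbb{N}$ and $w\in\Omega^{(0)}_n(\mu,2^{-R}\varepsilon)$. Then $\ell^0(w)$ is well defined and $$\|\ell^0(w)-\mu_0\|<\frac{6\varepsilon}{\alpha_0}.$$
   Context: $\overline{\mathbb{Z}}=\mathbb{Z}\cup\{\pm\infty\}$ with metric $d(h,k)=|\varphi(h)-\varphi(k)|$, $\varphi(\pm\infty)=\pm1$, $\varphi(k)=1-2^{-k}$ ($k\ge0$), $\varphi(k)=-1+2^{-|k|}$ ($k<0$). For signed measures, $\|\nu\|=\sup\{\int f\,d\nu: f\text{ 1-Lipschitz for }d,\ \sup|f|\le1\}$; $B(\mu,\varepsilon)=\{\nu\in\mathcal{P}(\overline{\mathbb{Z}}):\|\nu-\mu\|<\varepsilon\}$. $\Omega^{(0)}_n$: words $w=(w_1,\dots,w_n)\in\mathbb{Z}^n$, $w_1=0$, $|w_i-w_{i+1}|=1$; $\ell(w)=\frac1n\sum_j\delta_{w_j}$; $\Omega^{(0)}_n(\mu,\varepsilon)=\{w\in\Omega^{(0)}_n:\ell(w)\in B(\mu,\varepsilon)\}$.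 With $A^0=\{-R+1,\dots,R-1\}$, $N^0(w)=\#\{j\le n:w_j\in A^0\}$ and, when $N^0(w)\neq0$, $\ell^0(w)=\frac1{N^0(w)}\sum_{j\le n:\,w_j\in A^0}\delta_{w_j}$. $R_{\overline{\mathbb{Z}}}(\varepsilon)=\lceil\log_2(1/\varepsilon)\rceil+1$ and $R_{\mu_0}(\varepsilon)=\min\{R\in\mathbb{N}:\mu_0(\{-R+1,\dots,R-1\})>1-\varepsilon\}$. *)

theory Defs
  imports "HOL-Analysis.Analysis"
begin

datatype zbar = NegInf | Fin int | PosInf

fun phi :: "zbar \<Rightarrow> real" where
  "phi NegInf = -1"
| "phi PosInf = 1"
| "phi (Fin k) = (if k \<ge> 0 then 1 - 2 powr (- real_of_int k) else -1 + 2 powr (- real_of_int \<bar>k\<bar>))"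

definition dZ :: "zbar \<Rightarrow> zbar \<Rightarrow> real" where
  "dZ h k = \<bar>phi h - phi k\<bar>"

text \<open>Since the space is countable (with discrete Borel sigma-algebra), finite (signed)
  measures are represented by their point-mass functions.\<close>
definition is_prob :: "(zbar \<Rightarrow> real) \<Rightarrow> bool" where
  "is_prob p \<longleftrightarrow> (\<forall>x. p x \<ge> 0) \<and> (p has_sum 1) UNIV"

definition is_prob_Z :: "(int \<Rightarrow> real) \<Rightarrow> bool" where
  "is_prob_Z p \<longleftrightarrow> (\<forall>x. p x \<ge> 0) \<and> (p has_sum 1) UNIV"

definition knorm :: "(zbar \<Rightarrow> real) \<Rightarrow> real" where
  "knorm \<nu> = Sup {(\<Sum>\<^sub>\<infinity>x. f x * \<nu> x) | f.
      (\<forall>h k. \<bar>f h - f k\<bar> \<le> dZ h k) \<and> (\<forall>x. \<bar>f x\<bar> \<le> 1)}"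

definition pball :: "(zbar \<Rightarrow> real) \<Rightarrow> real \<Rightarrow> (zbar \<Rightarrow> real) set" where
  "pball \<mu> e = {\<nu>. is_prob \<nu> \<and> knorm (\<lambda>x. \<nu> x - \<mu> x) < e}"

definition embZ :: "(int \<Rightarrow> real) \<Rightarrow> zbar \<Rightarrow> real" where
  "embZ p x = (case x of Fin k \<Rightarrow> p k | _ \<Rightarrow> 0)"

definition mix :: "real \<Rightarrow> real \<Rightarrow> real \<Rightarrow> (int \<Rightarrow> real) \<Rightarrow> zbar \<Rightarrow> real" where
  "mix am a0 ap mu0 x = (case x of NegInf \<Rightarrow> am | Fin k \<Rightarrow> a0 * mu0 k | PosInf \<Rightarrow> ap)"

text \<open>Words w = (w_1,...,w_n) are lists of length n; w_j is \<open>w ! (j-1)\<close>.\<close>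
definition Omega0 :: "nat \<Rightarrow> int list set" where
  "Omega0 n = {w. length w = n \<and> n \<ge> 1 \<and> w ! 0 = 0 \<and>
      (\<forall>i. i + 1 < n \<longrightarrow> \<bar>w ! i - w ! (i + 1)\<bar> = 1)}"

definition ell :: "int list \<Rightarrow> zbar \<Rightarrow> real" where
  "ell w x = (case x of Fin k \<Rightarrow> real (card {j. j < length w \<and> w ! j = k}) / real (length w)
                        | _ \<Rightarrow> 0)"

definition Omega0_ball :: "nat \<Rightarrow> (zbar \<Rightarrow> real) \<Rightarrow> real \<Rightarrow> int list set" where
  "Omega0_ball n \<mu> e = {w \<in> Omega0 n. ell w \<in> pball \<mu> e}"

definition A0 :: "nat \<Rightarrow> int set" where
  "A0 R = {- int R + 1 .. int R - 1}"

definition N0 :: "nat \<Rightarrow> int list \<Rightarrow> nat" where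
  "N0 R w = card {j. j < length w \<and> w ! j \<in> A0 R}"

definition ell0 :: "nat \<Rightarrow> int list \<Rightarrow> zbar \<Rightarrow> real" where
  "ell0 R w x = (case x of Fin k \<Rightarrow>
        (if k \<in> A0 R then real (card {j. j < length w \<and> w ! j = k}) / real (N0 R w) else 0)
      | _ \<Rightarrow> 0)"

definition R_Zbar :: "real \<Rightarrow> int" where
  "R_Zbar e = \<lceil>log 2 (1 / e)\<rceil> + 1"

definition R_mu0 :: "(int \<Rightarrow> real) \<Rightarrow> real \<Rightarrow> nat" where
  "R_mu0 mu0 e = (LEAST R::nat. (\<Sum>k\<in>A0 R. mu0 k) > 1 - e)"

end

theory Submission
  imports Defs
begin

(* Every point of A0 R is at d-distance at least 2^-R from all other points of the compactified
   integers, so for S \<subseteq> A0 R the functions \<plusminus>2^-R on Fin ` S and 0 elsewhere are admissible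
   in the norm. *)

lemma sum_abs_le_twice_subset_sum_bound:
  fixes x :: "'a \<Rightarrow> real"
  assumes "finite A" "\<And>S. S \<subseteq> A \<Longrightarrow> \<bar>sum x S\<bar> \<le> e"
  shows "(\<Sum>k\<in>A. \<bar>x k\<bar>) \<le> 2 * e"
proof -
  define P where "P = {k \<in> A. 0 \<le> x k}"
  have "(\<Sum>k\<in>A. \<bar>x k\<bar>) = (\<Sum>k\<in>P. \<bar>x k\<bar>) + (\<Sum>k\<in>A - P. \<bar>x k\<bar>)"
    using assms(1) by (simp add: P_def sum.subset_diff[of P A])
  also have "\<dots> = sum x P + (\<Sum>k\<in>A - P. - x k)"
    by (intro arg_cong2[where f = "(+)"] sum.cong) (auto simp: P_def)
  also have "\<dots> \<le> 2 * e"
    using assms(2)[of P] assms(2)[of "A - P"] by (auto simp: P_def sum_negf)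
  finally show ?thesis .
qed

lemma sum_abs_normalized_diff_le:
  fixes L \<mu> :: "'a \<Rightarrow> real"
  assumes "finite A" "\<And>k. k \<in> A \<Longrightarrow> 0 \<le> L k" "0 < sum L A" "0 < c" "sum \<mu> A \<le> 1"
    and close: "\<And>S. S \<subseteq> A \<Longrightarrow> \<bar>sum L S - c * sum \<mu> S\<bar> \<le> e"
  shows "(\<Sum>k\<in>A. \<bar>L k / sum L A - \<mu> k\<bar>) \<le> 3 * e / c + (1 - sum \<mu> A)"
proof -
  define a where "a = sum L A"
  have a_pos: "0 < a"
    using assms(3) by (simp add: a_def)
  have "\<bar>a - c * sum \<mu> A\<bar> \<le> e"
    using close[of A] by (simp add: a_def)
  moreover have "0 \<le> c - c * sum \<mu> A"
    using assms(4,5) by simp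
  ultimately have "\<bar>a - c\<bar> / c \<le> (e + (c - c * sum \<mu> A)) / c"
    using assms(4) by (intro divide_right_mono) linarith+
  also have "\<dots> = e / c + (1 - sum \<mu> A)"
    using assms(4) by (simp add: field_simps)
  finally have deficit: "\<bar>a - c\<bar> / c \<le> e / c + (1 - sum \<mu> A)" .
  have "\<bar>L k / a - L k / c\<bar> = L k * (\<bar>a - c\<bar> / (a * c))" if "k \<in> A" for k
  proof -
    have "L k / a - L k / c = L k * ((c - a) / (a * c))"
      using assms(3,4) by (simp add: a_def field_simps)
    then show ?thesis
      using assms(2)[OF that] assms(4) a_pos by (simp add: abs_mult abs_minus_commute)
  qed
  then have "(\<Sum>k\<in>A. \<bar>L k / a - L k / c\<bar>) = (\<Sum>k\<in>A. L k * (\<bar>a - c\<bar> / (a * c)))"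
    by (rule sum.cong[OF refl])
  also have "\<dots> = a * (\<bar>a - c\<bar> / (a * c))"
    unfolding a_def by (rule sum_distrib_right[symmetric])
  also have "\<dots> = \<bar>a - c\<bar> / c"
    using assms(3) by (simp add: a_def)
  finally have rescale: "(\<Sum>k\<in>A. \<bar>L k / a - L k / c\<bar>) = \<bar>a - c\<bar> / c" .
  have "(\<Sum>k\<in>A. \<bar>L k / c - \<mu> k\<bar>) \<le> 2 * e / c"
  proof -
    have "(\<Sum>k\<in>A. \<bar>L k - c * \<mu> k\<bar>) \<le> 2 * e"
      using assms(1) by (rule sum_abs_le_twice_subset_sum_bound)
        (simp add: close sum_subtractf flip: sum_distrib_left)
    moreover have "\<bar>L k / c - \<mu> k\<bar> = \<bar>L k - c * \<mu> k\<bar> / c" for k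
      using assms(4) by (simp add: field_simps)
    ultimately show ?thesis
      using assms(4) by (simp add: sum_divide_distrib[symmetric] divide_right_mono)
  qed
  moreover have "(\<Sum>k\<in>A. \<bar>L k / a - \<mu> k\<bar>)
      \<le> (\<Sum>k\<in>A. \<bar>L k / a - L k / c\<bar>) + (\<Sum>k\<in>A. \<bar>L k / c - \<mu> k\<bar>)"
    by (simp add: sum.distrib[symmetric] sum_mono)
  moreover have "3 * e / c = e / c + 2 * e / c"
    by (simp add: field_simps)
  ultimately show ?thesis
    using deficit rescale unfolding a_def by linarith
qed

lemma phi_Fin_succ_diff:
  "phi (Fin (i + 1)) - phi (Fin i) = 2 powr (- real_of_int (max (i + 1) (- i)))"
proof (cases "0 \<le> i")
  case True
  then show ?thesis by (simp add: powr_diff powr_minus field_simps)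
next
  case False
  then consider "i = -1" | "i \<le> -2" by linarith
  then show ?thesis
  proof cases
    case 2
    then show ?thesis by (simp add: powr_add)
  qed (simp add: powr_minus)
qed

lemma phi_Fin_mono: "i \<le> j \<Longrightarrow> phi (Fin i) \<le> phi (Fin j)"
proof (induction j rule: int_ge_induct)
  case (step j)
  then show ?case using phi_Fin_succ_diff[of j] by (smt (verit) powr_gt_zero)
qed simp

lemma abs_phi_le_1: "\<bar>phi x\<bar> \<le> 1"
proof (cases x)
  case (Fin k)
  have "2 powr (- real_of_int \<bar>k\<bar>) \<le> 1"
    using powr_mono[of "- real_of_int \<bar>k\<bar>" 0 2] by simp
  then show ?thesis using Fin by (auto simp: abs_if)
qed auto

lemma dZ_Fin_ge:
  assumes "k \<in> A0 R" "x \<noteq> Fin k"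
  shows "2 powr (- real R) \<le> dZ (Fin k) x"
proof -
  have gap: "2 powr (- real R) \<le> phi (Fin (i + 1)) - phi (Fin i)"
    if "- int R \<le> i" "i \<le> int R - 1" for i
    unfolding phi_Fin_succ_diff using that by (intro powr_mono) auto
  have k: "- int R + 1 \<le> k" "k \<le> int R - 1" using assms(1) by (auto simp: A0_def)
  have "phi (Fin (k + 1)) \<le> phi x \<or> phi x \<le> phi (Fin (k - 1))"
  proof (cases x)
    case (Fin j)
    with assms(2) have "k + 1 \<le> j \<or> j \<le> k - 1" by auto
    then show ?thesis using Fin phi_Fin_mono by blast
  next
    case NegInf
    then show ?thesis
      using abs_phi_le_1[of "Fin (k - 1)"] by (simp del: phi.simps(3) add: abs_le_iff)
  next
    case PosInf
    then show ?thesis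
      using abs_phi_le_1[of "Fin (k + 1)"] by (simp del: phi.simps(3) add: abs_le_iff)
  qed
  then show ?thesis
    using gap[of k] gap[of "k - 1"] k by (auto simp: dZ_def)
qed

definition kr_test :: "(zbar \<Rightarrow> real) \<Rightarrow> bool" where
  "kr_test f \<longleftrightarrow> (\<forall>h k. \<bar>f h - f k\<bar> \<le> dZ h k) \<and> (\<forall>x. \<bar>f x\<bar> \<le> 1)"

lemma knorm_eq_Sup_kr_test: "knorm \<nu> = Sup {(\<Sum>\<^sub>\<infinity>x. f x * \<nu> x) | f. kr_test f}"
  unfolding knorm_def kr_test_def ..

lemma infsum_kr_test_mult_le:
  assumes "\<nu> summable_on UNIV" "kr_test f"
  shows "(\<Sum>\<^sub>\<infinity>x. f x * \<nu> x) \<le> (\<Sum>\<^sub>\<infinity>x. \<bar>\<nu> x\<bar>)"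
proof -
  have le: "\<bar>f x * \<nu> x\<bar> \<le> \<bar>\<nu> x\<bar>" for x
    using assms(2) by (auto simp: kr_test_def abs_mult intro: mult_left_le_one_le)
  have abs_summable: "(\<lambda>x. norm (\<nu> x)) summable_on UNIV"
    using assms(1) summable_on_iff_abs_summable_on_real by blast
  then have "(\<lambda>x. norm (f x * \<nu> x)) summable_on UNIV"
    by (rule Infinite_Sum.abs_summable_on_comparison_test) (use le in auto)
  then have summable: "(\<lambda>x. f x * \<nu> x) summable_on UNIV"
    using summable_on_iff_abs_summable_on_real by blast
  show "(\<Sum>\<^sub>\<infinity>x. f x * \<nu> x) \<le> (\<Sum>\<^sub>\<infinity>x. \<bar>\<nu> x\<bar>)"
    using summable abs_summable unfolding real_norm_def
    by (rule infsum_mono) (use le in \<open>simp add: abs_le_iff\<close>)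
qed

lemma infsum_kr_test_mult_le_knorm:
  assumes "\<nu> summable_on UNIV" "kr_test f"
  shows "(\<Sum>\<^sub>\<infinity>x. f x * \<nu> x) \<le> knorm \<nu>"
  unfolding knorm_eq_Sup_kr_test
proof (rule cSup_upper)
  show "bdd_above {(\<Sum>\<^sub>\<infinity>x. f x * \<nu> x) | f. kr_test f}"
    using infsum_kr_test_mult_le[OF assms(1)] by (intro bdd_aboveI) blast
qed (use assms(2) in blast)

lemma knorm_le_infsum_abs:
  assumes "\<nu> summable_on UNIV"
  shows "knorm \<nu> \<le> (\<Sum>\<^sub>\<infinity>x. \<bar>\<nu> x\<bar>)"
  unfolding knorm_eq_Sup_kr_test
proof (rule cSup_least)
  have "kr_test (\<lambda>_. 0)" by (simp add: kr_test_def dZ_def)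
  then show "{(\<Sum>\<^sub>\<infinity>x. f x * \<nu> x) | f. kr_test f} \<noteq> {}" by blast
qed (use infsum_kr_test_mult_le[OF assms] in blast)

lemma kr_test_indicator_Fin:
  assumes "S \<subseteq> A0 R" "\<bar>d\<bar> \<le> 2 powr (- real R)"
  shows "kr_test (\<lambda>x. if x \<in> Fin ` S then d else 0)"
proof -
  have jump: "\<bar>d\<bar> \<le> dZ (Fin k) x" if "k \<in> S" "x \<notin> Fin ` S" for k x
    using dZ_Fin_ge[of k R x] assms that by force
  have "\<bar>d\<bar> \<le> 1"
    using assms(2) powr_mono[of "- real R" 0 2] by simp
  moreover have "dZ h k = dZ k h" "0 \<le> dZ h k" for h k
    by (auto simp: dZ_def)
  ultimately show ?thesis
    unfolding kr_test_def by (smt (verit) jump image_iff)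
qed

lemma abs_sum_Fin_le_knorm:
  assumes "\<nu> summable_on UNIV" "S \<subseteq> A0 R"
  shows "2 powr (- real R) * \<bar>\<Sum>k\<in>S. \<nu> (Fin k)\<bar> \<le> knorm \<nu>"
proof -
  have "d * (\<Sum>k\<in>S. \<nu> (Fin k)) \<le> knorm \<nu>" if d: "\<bar>d\<bar> = 2 powr (- real R)" for d
  proof -
    let ?f = "\<lambda>x. if x \<in> Fin ` S then d else 0"
    have "finite S" using assms(2) finite_subset by (auto simp: A0_def)
    then have "(\<Sum>\<^sub>\<infinity>x. ?f x * \<nu> x) = (\<Sum>x\<in>Fin ` S. d * \<nu> x)"
      by (subst infsum_cong_neutral[where T = "Fin ` S"]) auto
    also have "\<dots> = d * (\<Sum>k\<in>S. \<nu> (Fin k))"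
      by (subst sum.reindex) (auto simp: inj_on_def sum_distrib_left)
    finally show ?thesis
      using infsum_kr_test_mult_le_knorm[OF assms(1) kr_test_indicator_Fin[OF assms(2)], of d] d
      by simp
  qed
  from this[of "2 powr (- real R)"] this[of "- (2 powr (- real R))"] show ?thesis
    by (simp add: abs_if)
qed

lemma has_sum_zbarI:
  fixes f :: "zbar \<Rightarrow> 'a::topological_comm_monoid_add"
  assumes "((\<lambda>k. f (Fin k)) has_sum s) UNIV"
  shows "(f has_sum (f NegInf + (f PosInf + s))) UNIV"
proof -
  have "(f has_sum s) (range Fin)"
    using assms by (subst has_sum_reindex) (auto simp: inj_on_def o_def)
  then have "(f has_sum (f PosInf + s)) (insert PosInf (range Fin))"
    by (rule has_sum_insert[rotated]) auto
  then have "(f has_sum (f NegInf + (f PosInf + s))) (insert NegInf (insert PosInf (range Fin)))"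
    by (rule has_sum_insert[rotated]) auto
  moreover have "insert NegInf (insert PosInf (range Fin)) = UNIV"
    by (auto intro: zbar.exhaust)
  ultimately show ?thesis by simp
qed

lemma summable_on_mix:
  assumes "is_prob_Z mu0"
  shows "mix am a0 ap mu0 summable_on UNIV"
proof -
  have "((\<lambda>k. a0 * mu0 k) has_sum a0 * 1) UNIV"
    using assms by (intro has_sum_cmult_right) (simp add: is_prob_Z_def)
  then show ?thesis
    using has_sum_zbarI[of "mix am a0 ap mu0"] has_sum_imp_summable by (fastforce simp: mix_def)
qed

lemma abs_sum_Fin_diff_less:
  assumes "p \<in> pball q (2 powr (- real R) * e)" "q summable_on UNIV" "S \<subseteq> A0 R"
  shows "\<bar>\<Sum>k\<in>S. p (Fin k) - q (Fin k)\<bar> < e"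
proof -
  let ?\<nu> = "\<lambda>x. p x - q x"
  have "p summable_on UNIV"
    using assms(1) by (auto simp: pball_def is_prob_def summable_on_def)
  then have "?\<nu> summable_on UNIV"
    using summable_on_add[of p UNIV "\<lambda>x. - q x"] assms(2) by (simp add: summable_on_uminus)
  moreover have "knorm ?\<nu> < 2 powr (- real R) * e"
    using assms(1) by (simp add: pball_def)
  ultimately have "2 powr (- real R) * \<bar>\<Sum>k\<in>S. ?\<nu> (Fin k)\<bar> < 2 powr (- real R) * e"
    using abs_sum_Fin_le_knorm[OF _ assms(3), of ?\<nu>] by linarith
  then show ?thesis by simp
qed

lemma knorm_diff_embZ_le:
  assumes "finite A" "\<And>x. x \<notin> Fin ` A \<Longrightarrow> q x = 0" "is_prob_Z mu0"
  shows "knorm (\<lambda>x. q x - embZ mu0 x) \<le> (\<Sum>k\<in>A. \<bar>q (Fin k) - mu0 k\<bar>) + (1 - sum mu0 A)"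
proof -
  let ?\<nu> = "\<lambda>x. q x - embZ mu0 x"
  let ?s = "(\<Sum>k\<in>A. \<bar>q (Fin k) - mu0 k\<bar>) + (1 - sum mu0 A)"
  have mu0: "(mu0 has_sum 1) UNIV" "\<And>k. 0 \<le> mu0 k"
    using assms(3) by (auto simp: is_prob_Z_def)
  have q_Fin: "q (Fin k) = 0" if "k \<notin> A" for k
    using assms(2) that by auto
  have q_inf: "q NegInf = 0" "q PosInf = 0"
    using assms(2) by auto
  have "((\<lambda>k. \<bar>?\<nu> (Fin k)\<bar>) has_sum (\<Sum>k\<in>A. \<bar>q (Fin k) - mu0 k\<bar>)) A"
    using assms(1) by (simp add: embZ_def)
  moreover have "(mu0 has_sum (1 - sum mu0 A)) (UNIV - A)"
    using has_sum_Diff[OF mu0(1) has_sum_finite[OF assms(1)]] by simp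
  then have "((\<lambda>k. \<bar>?\<nu> (Fin k)\<bar>) has_sum (1 - sum mu0 A)) (UNIV - A)"
    by (rule has_sum_cong[THEN iffD1, rotated]) (use q_Fin mu0(2) in \<open>auto simp: embZ_def\<close>)
  ultimately have "((\<lambda>k. \<bar>?\<nu> (Fin k)\<bar>) has_sum ?s) (A \<union> (UNIV - A))"
    by (intro has_sum_Un_disjoint) auto
  then have "((\<lambda>x. \<bar>?\<nu> x\<bar>) has_sum ?s) UNIV"
    using has_sum_zbarI[of "\<lambda>x. \<bar>?\<nu> x\<bar>"] q_inf by (simp add: embZ_def)
  moreover from this have "?\<nu> summable_on UNIV"
    using summable_on_iff_abs_summable_on_real has_sum_imp_summable by fastforce
  ultimately show ?thesis
    using knorm_le_infsum_abs infsumI by metis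
qed

lemma finite_A0 [simp]: "finite (A0 R)"
  by (simp add: A0_def)

lemma A0_mono: "R \<le> R' \<Longrightarrow> A0 R \<subseteq> A0 R'"
  by (auto simp: A0_def)

lemma sum_A0_R_mu0_gt:
  assumes "is_prob_Z mu0" "0 < e"
  shows "1 - e < sum mu0 (A0 (R_mu0 mu0 e))"
  unfolding R_mu0_def
proof (rule LeastI_ex)
  have "(sum mu0 \<longlongrightarrow> 1) (finite_subsets_at_top UNIV)"
    using assms(1) by (simp add: is_prob_Z_def has_sum_def)
  then have "eventually (\<lambda>F. 1 - e < sum mu0 F) (finite_subsets_at_top UNIV)"
    using assms(2) by (intro order_tendstoD(1)) auto
  then obtain X where X: "finite X" "\<And>Y. finite Y \<Longrightarrow> X \<subseteq> Y \<Longrightarrow> 1 - e < sum mu0 Y"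
    unfolding eventually_finite_subsets_at_top by auto
  define R where "R = Suc (Max (insert 0 ((\<lambda>x. nat \<bar>x\<bar>) ` X)))"
  have "nat \<bar>x\<bar> < R" if "x \<in> X" for x
    using X(1) that by (auto simp: R_def less_Suc_eq_le)
  then have "X \<subseteq> A0 R"
    by (force simp: A0_def)
  then show "\<exists>R. 1 - e < sum mu0 (A0 R)"
    using X(2)[of "A0 R"] by auto
qed

lemma R_mu0_le_imp_sum_A0_gt:
  assumes "is_prob_Z mu0" "0 < e" "R_mu0 mu0 e \<le> R"
  shows "1 - e < sum mu0 (A0 R)"
proof -
  have "sum mu0 (A0 (R_mu0 mu0 e)) \<le> sum mu0 (A0 R)"
    using assms(1,3) by (intro sum_mono2 A0_mono) (auto simp: is_prob_Z_def)
  with sum_A0_R_mu0_gt[OF assms(1,2)] show ?thesis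
    by linarith
qed

lemma ell_nonneg: "0 \<le> ell w x"
  by (simp add: ell_def split: zbar.split)

lemma sum_card_nth_eq:
  assumes "finite B"
  shows "(\<Sum>k\<in>B. card {j. j < length w \<and> w ! j = k}) = card {j. j < length w \<and> w ! j \<in> B}"
proof -
  have "card (\<Union>k\<in>B. {j. j < length w \<and> w ! j = k})
      = (\<Sum>k\<in>B. card {j. j < length w \<and> w ! j = k})"
    using assms by (intro card_UN_disjoint) auto
  moreover have "{j. j < length w \<and> w ! j \<in> B} = (\<Union>k\<in>B. {j. j < length w \<and> w ! j = k})"
    by auto
  ultimately show ?thesis
    by simp
qed

lemma sum_ell_A0: "(\<Sum>k\<in>A0 R. ell w (Fin k)) = real (N0 R w) / real (length w)"
  by (simp add: ell_def N0_def sum_divide_distrib[symmetric] sum_card_nth_eq flip: of_nat_sum)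

lemma ell0_eq_normalized_ell:
  "ell0 R w x = (if x \<in> Fin ` A0 R then ell w x / (\<Sum>k\<in>A0 R. ell w (Fin k)) else 0)"
proof (cases x)
  case (Fin k)
  show ?thesis
  proof (cases "length w = 0")
    case False
    have "Fin k \<in> Fin ` A0 R \<longleftrightarrow> k \<in> A0 R"
      by auto
    then show ?thesis
      using Fin False by (simp add: sum_ell_A0 ell0_def ell_def[of w "Fin k"])
  qed (simp add: Fin ell0_def ell_def)
qed (auto simp: ell0_def ell_def)

lemma Omega0_ball_abs_sum_diff_le:
  assumes "w \<in> Omega0_ball n (mix am a0 ap mu0) (2 powr (- real R) * e)" "is_prob_Z mu0"
    and "S \<subseteq> A0 R"
  shows "\<bar>(\<Sum>k\<in>S. ell w (Fin k)) - a0 * sum mu0 S\<bar> \<le> e"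
  using abs_sum_Fin_diff_less[OF _ summable_on_mix[OF assms(2)] assms(3)] assms(1)
  by (fastforce simp: Omega0_ball_def mix_def sum_subtractf sum_distrib_left)

theorem lemma2p5:
  fixes am a0 ap eps :: real and mu0 :: "int \<Rightarrow> real" and R n :: nat and w :: "int list"
  assumes "am \<ge> 0" and "a0 \<ge> 0" and "ap \<ge> 0" and "am + a0 + ap = 1"
    and "is_prob_Z mu0" and "a0 \<noteq> 0"
    and "0 < eps" and "eps < a0 / 2"
    and "int R > max (R_Zbar eps) (int (R_mu0 mu0 eps))"
    and "w \<in> Omega0_ball n (mix am a0 ap mu0) (2 powr (- real R) * eps)"
  shows "N0 R w \<noteq> 0 \<and> knorm (\<lambda>x. ell0 R w x - embZ mu0 x) < 6 * eps / a0"
proof -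
  let ?A = "A0 R" and ?L = "\<lambda>k. ell w (Fin k)" and ?m = "sum mu0 (A0 R)"
  have mu0: "\<And>k. 0 \<le> mu0 k" "(mu0 has_sum 1) UNIV"
    using assms(5) by (auto simp: is_prob_Z_def)
  have a0: "0 < a0" "a0 \<le> 1"
    using assms(1-4,6) by auto
  note close = Omega0_ball_abs_sum_diff_le[OF assms(10,5)]
  have m_le: "?m \<le> 1"
    using finite_sum_le_has_sum[OF mu0(2)] mu0(1) by auto
  have m_gt: "1 - eps < ?m"
    using R_mu0_le_imp_sum_A0_gt[OF assms(5,7)] assms(9) by simp
  have "a0 * (1 - eps) \<le> a0 * ?m" "a0 * eps \<le> eps"
    using m_gt a0 assms(7) by (auto intro: mult_left_mono mult_left_le_one_le)
  with close[of ?A] assms(8) have mass_pos: "0 < sum ?L ?A"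
    by (simp add: right_diff_distrib)
  then have "N0 R w \<noteq> 0"
    by (auto simp: sum_ell_A0 zero_less_divide_iff)
  have "knorm (\<lambda>x. ell0 R w x - embZ mu0 x)
      \<le> (\<Sum>k\<in>?A. \<bar>ell0 R w (Fin k) - mu0 k\<bar>) + (1 - ?m)"
    by (rule knorm_diff_embZ_le) (auto simp: ell0_eq_normalized_ell assms(5))
  also have "(\<Sum>k\<in>?A. \<bar>ell0 R w (Fin k) - mu0 k\<bar>) = (\<Sum>k\<in>?A. \<bar>?L k / sum ?L ?A - mu0 k\<bar>)"
    by (intro sum.cong) (auto simp: ell0_eq_normalized_ell)
  also have "\<dots> \<le> 3 * eps / a0 + (1 - ?m)"
    by (rule sum_abs_normalized_diff_le) (use close mass_pos m_le a0 ell_nonneg in auto)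
  also have "\<dots> + (1 - ?m) < 5 * eps / a0"
  proof -
    have "eps \<le> eps / a0"
      using a0 assms(7) by (simp add: le_divide_eq mult_left_le_one_le)
    moreover have "5 * eps / a0 = 3 * eps / a0 + 2 * (eps / a0)"
      by simp
    ultimately show ?thesis
      using m_gt by linarith
  qed
  finally show ?thesis
    using \<open>N0 R w \<noteq> 0\<close> a0 assms(7) by (simp add: field_simps)
qed

end
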